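(* Let $(\mathcal H,\mathfrak A_0)$ be a Hilbert quasi *-algebra. A linear functional $\omega$ on $\mathcal H$ belongs to $\mathcal R_c(\mathcal H,\mathfrak A_0)$ if and only if there exists a unique w-positive bounded element $\eta\in\mathcal H$ such that $\omega(\xi)=\langle\xi,\eta\rangle$ for all $\xi\in\mathcal H$.
   Context: A Hilbert algebra is a *-algebra $\mathfrak A_0$ with an inner product $\langle\cdot,\cdot\rangle$ such that (i) for each $x$, $y\mapsto xy$ is continuous for the inner product norm; (ii) $\langle xy,z\rangle=\langle y,x^*z\rangle$ for all $x,y,z$; (iii) $\langle x,y\rangle=\langle y^*,x^*\rangle$ for all $x,y$; (iv) the linear span of $\{xy:x,y\in\mathfrak A_0\}$ is dense in $\mathfrak A_0$. Let $\mathcal H$ be the Hilbert space completion of $\mathfrak A_0$; the involution extends isometrically to $\mathcal H$, and the products $\xi x$, $x\xi$ for $\xi\in\mathcal H$, $x\in\mathfrak A_0$ are defined by continuity. It is assumed that (A): if $\xi\in\mathcal H$ and $\xi x=0$ for all $x\in\mathfrak A_0$ then $\xi=0$. With these operations $(\mathcal H,\mathfrak A_0)$ is a Banach quasi *-algebra (norm from the inner product), called a Hilbert quasi *-algebra. A linear functional $\omega$ on $\mathcal H$ is representable if (L.1) $\omega(x^*x)\ge0$ for all $x\in\mathfrak A_0$; (L.2) $\omega(y^*\xi^*x)=\overline{\omega(x^*\xi y)}$ for all $x,y\in\mathfrak A_0$, $\xi\in\mathcal H$; (L.3) for every $\xi\in\mathcal H$ there is $\gamma_\xi>0$ with $|\omega(\xi^*x)|\le\gamma_\xi\,\omega(x^*x)^{1/2}$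 for all $x\in\mathfrak A_0$. $\mathcal R_c(\mathcal H,\mathfrak A_0)$ is the set of norm-continuous representable functionals. For $\xi\in\mathcal H$, $L_\xi x=\xi x$ ($x\in\mathfrak A_0$); $\xi$ is bounded if $L_\xi$ is bounded on $\mathfrak A_0$ (equivalently $x\mapsto x\xi$ is bounded). $\xi$ is w-positive if $\langle\xi x,x\rangle\ge0$ for all $x\in\mathfrak A_0$. *)

theory Defs
  imports "HOL-Analysis.Analysis" "HOL-Library.Complex_Order"
begin

text \<open>The complex Hilbert space H is modelled as a real Banach space 'a together with a
complex scalar multiplication cs (extending the real one) and a complex inner product ip
(linear in the first, conjugate-linear in the second argument) inducing the norm.\<close>

definition complex_hilbert :: "(complex \<Rightarrow> 'a::{real_normed_vector,complete_space} \<Rightarrow> 'a)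
    \<Rightarrow> ('a \<Rightarrow> 'a \<Rightarrow> complex) \<Rightarrow> bool" where
  "complex_hilbert cs ip \<longleftrightarrow>
     (\<forall>r x. cs (complex_of_real r) x = r *\<^sub>R x) \<and>
     (\<forall>a b x. cs (a * b) x = cs a (cs b x)) \<and>
     (\<forall>a b x. cs (a + b) x = cs a x + cs b x) \<and>
     (\<forall>a x y. cs a (x + y) = cs a x + cs a y) \<and>
     (\<forall>x y z. ip (x + y) z = ip x z + ip y z) \<and>
     (\<forall>c x y. ip (cs c x) y = c * ip x y) \<and>
     (\<forall>x y. ip x y = cnj (ip y x)) \<and>
     (\<forall>x. ip x x = complex_of_real ((norm x)\<^sup>2))"

definition complex_linear :: "(complex \<Rightarrow> 'a::real_vector \<Rightarrow> 'a) \<Rightarrow> (complex \<Rightarrow> 'b::real_vector \<Rightarrow> 'b)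
    \<Rightarrow> ('a \<Rightarrow> 'b) \<Rightarrow> bool" where
  "complex_linear csa csb f \<longleftrightarrow> (\<forall>x y. f (x + y) = f x + f y) \<and> (\<forall>c x. f (csa c x) = csb c (f x))"

definition complex_antilinear :: "(complex \<Rightarrow> 'a::real_vector \<Rightarrow> 'a) \<Rightarrow> ('a \<Rightarrow> 'a) \<Rightarrow> bool" where
  "complex_antilinear cs f \<longleftrightarrow> (\<forall>x y. f (x + y) = f x + f y) \<and> (\<forall>c x. f (cs c x) = cs (cnj c) (f x))"

definition cspan :: "(complex \<Rightarrow> 'a::real_vector \<Rightarrow> 'a) \<Rightarrow> 'a set \<Rightarrow> 'a set" where
  "cspan cs S = {\<Sum>v\<in>F. cs (c v) v | F c. finite F \<and> F \<subseteq> S}"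

definition complex_subspace :: "(complex \<Rightarrow> 'a::real_vector \<Rightarrow> 'a) \<Rightarrow> 'a set \<Rightarrow> bool" where
  "complex_subspace cs S \<longleftrightarrow> 0 \<in> S \<and> (\<forall>x\<in>S. \<forall>y\<in>S. x + y \<in> S) \<and> (\<forall>c. \<forall>x\<in>S. cs c x \<in> S)"

text \<open>Hilbert quasi *-algebra (H, A0): H is a complex Hilbert space, A0 a dense subspace which
is a Hilbert algebra (axioms (i)-(iv)) with respect to mul and star; mul \<xi> x and mul x \<xi>
(\<xi> in H, x in A0) are the extensions by continuity, star is the isometric extension of the
involution, and condition (A) holds.\<close>
definition hilbert_quasi_star_algebra ::
  "(complex \<Rightarrow> 'a::{real_normed_vector,complete_space} \<Rightarrow> 'a) \<Rightarrow> ('a \<Rightarrow> 'a \<Rightarrow> complex)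
   \<Rightarrow> 'a set \<Rightarrow> ('a \<Rightarrow> 'a \<Rightarrow> 'a) \<Rightarrow> ('a \<Rightarrow> 'a) \<Rightarrow> bool" where
  "hilbert_quasi_star_algebra cs ip A0 mul star \<longleftrightarrow>
     complex_hilbert cs ip \<and>
     complex_subspace cs A0 \<and> closure A0 = UNIV \<and>
     \<comment> \<open>*-algebra structure on A0\<close>
     (\<forall>x\<in>A0. \<forall>y\<in>A0. mul x y \<in> A0) \<and>
     (\<forall>x\<in>A0. \<forall>y\<in>A0. \<forall>z\<in>A0. mul (mul x y) z = mul x (mul y z)) \<and>
     (\<forall>x\<in>A0. star x \<in> A0) \<and>
     (\<forall>x\<in>A0. \<forall>y\<in>A0. star (mul x y) = mul (star y) (star x)) \<and>
     \<comment> \<open>involution on H: antilinear isometric involution (extension from A0)\<close>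
     complex_antilinear cs star \<and> (\<forall>\<xi>. star (star \<xi>) = \<xi>) \<and> (\<forall>\<xi>. norm (star \<xi>) = norm \<xi>) \<and>
     \<comment> \<open>products with one factor in A0: linear and continuous in the H-factor\<close>
     (\<forall>x\<in>A0. complex_linear cs cs (\<lambda>\<xi>. mul \<xi> x) \<and> continuous_on UNIV (\<lambda>\<xi>. mul \<xi> x)) \<and>
     (\<forall>x\<in>A0. complex_linear cs cs (\<lambda>\<xi>. mul x \<xi>) \<and> continuous_on UNIV (\<lambda>\<xi>. mul x \<xi>)) \<and>
     \<comment> \<open>(ii), (iii), (iv)\<close>
     (\<forall>x\<in>A0. \<forall>y\<in>A0. \<forall>z\<in>A0. ip (mul x y) z = ip y (mul (star x) z)) \<and>
     (\<forall>x\<in>A0. \<forall>y\<in>A0. ip x y = ip (star y) (star x)) \<and>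
     A0 \<subseteq> closure (cspan cs {mul x y | x y. x \<in> A0 \<and> y \<in> A0}) \<and>
     \<comment> \<open>(A)\<close>
     (\<forall>\<xi>. (\<forall>x\<in>A0. mul \<xi> x = 0) \<longrightarrow> \<xi> = 0)"

definition representable ::
  "'a set \<Rightarrow> ('a \<Rightarrow> 'a \<Rightarrow> 'a) \<Rightarrow> ('a \<Rightarrow> 'a) \<Rightarrow> ('a \<Rightarrow> complex) \<Rightarrow> bool" where
  "representable A0 mul star \<omega> \<longleftrightarrow>
     (\<forall>x\<in>A0. 0 \<le> \<omega> (mul (star x) x)) \<and>
     (\<forall>x\<in>A0. \<forall>y\<in>A0. \<forall>\<xi>. \<omega> (mul (mul (star y) (star \<xi>)) x) = cnj (\<omega> (mul (mul (star x) \<xi>) y))) \<and>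
     (\<forall>\<xi>. \<exists>\<gamma>>0. \<forall>x\<in>A0. cmod (\<omega> (mul (star \<xi>) x)) \<le> \<gamma> * sqrt (Re (\<omega> (mul (star x) x))))"

definition Rc ::
  "(complex \<Rightarrow> 'a::real_normed_vector \<Rightarrow> 'a) \<Rightarrow> 'a set \<Rightarrow> ('a \<Rightarrow> 'a \<Rightarrow> 'a) \<Rightarrow> ('a \<Rightarrow> 'a) \<Rightarrow> ('a \<Rightarrow> complex) set" where
  "Rc cs A0 mul star = {\<omega>. complex_linear cs (*) \<omega> \<and> representable A0 mul star \<omega> \<and> continuous_on UNIV \<omega>}"

definition bounded_elem :: "'a::real_normed_vector set \<Rightarrow> ('a \<Rightarrow> 'a \<Rightarrow> 'a) \<Rightarrow> 'a \<Rightarrow> bool" where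
  "bounded_elem A0 mul \<xi> \<longleftrightarrow> (\<exists>C. \<forall>x\<in>A0. norm (mul \<xi> x) \<le> C * norm x)"

definition w_positive :: "('a \<Rightarrow> 'a \<Rightarrow> complex) \<Rightarrow> 'a set \<Rightarrow> ('a \<Rightarrow> 'a \<Rightarrow> 'a) \<Rightarrow> 'a \<Rightarrow> bool" where
  "w_positive ip A0 mul \<xi> \<longleftrightarrow> (\<forall>x\<in>A0. 0 \<le> ip (mul \<xi> x) x)"

end

theory Submission
  imports Defs
begin

text \<open>
  If \<omega> is in R_c, the Riesz theorem gives \<eta> with \<omega> = \<langle>\<cdot>, \<eta>\<rangle>; (L.1) makes \<eta> w-positive, and
  (L.3) says that for every \<zeta> the functionals u \<mapsto> \<langle>\<zeta>, \<eta>u\<rangle> on the unit ball of A0 are dominated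
  by (\<langle>\<eta>u, u\<rangle>)^(1/2) \<le> \<parallel>\<eta>u\<parallel>^(1/2); a Baire category argument turns this pointwise bound into a
  uniform one, so \<eta> is bounded.  Conversely, a w-positive \<eta> is self-adjoint (polarization
  and (iv)), which gives (L.2), and for bounded \<eta> the Cauchy-Schwarz inequality of the positive
  form \<langle>\<eta>u, v\<rangle> yields \<parallel>\<eta>u\<parallel>^2 \<le> C \<langle>\<eta>u, u\<rangle>, which gives (L.3).  Uniqueness is nondegeneracy
  of the inner product.
\<close>

lemma Baire_uniform_bound_on_ball:
  fixes g :: "'i \<Rightarrow> 'a::{real_normed_vector,complete_space} \<Rightarrow> real"
  assumes cont: "\<And>i. i \<in> I \<Longrightarrow> continuous_on UNIV (g i)"
    and pointwise: "\<And>\<zeta>. \<exists>\<gamma>. \<forall>i\<in>I. g i \<zeta> \<le> \<gamma>"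
  shows "\<exists>z r \<gamma>. r > 0 \<and> (\<forall>\<zeta>\<in>ball z r. \<forall>i\<in>I. g i \<zeta> \<le> \<gamma>)"
proof (rule ccontr)
  assume no_ball: "\<not> ?thesis"
  define F where "F n = {\<zeta>. \<forall>i\<in>I. g i \<zeta> \<le> real n}" for n :: nat
  have "closedin euclidean (F n) \<and> euclidean interior_of (F n) = {}" for n
  proof
    have "F n = (\<Inter>i\<in>I. {\<zeta>. g i \<zeta> \<le> real n})"
      by (auto simp: F_def)
    moreover have "closed {\<zeta>. g i \<zeta> \<le> real n}" if "i \<in> I" for i
      using cont[OF that] by (intro closed_Collect_le continuous_on_const)
    ultimately show "closedin euclidean (F n)"
      by (simp add: closed_INT)
    show "euclidean interior_of (F n) = {}"
    proof (rule ccontr)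
      assume "euclidean interior_of (F n) \<noteq> {}"
      then obtain z where "z \<in> euclidean interior_of (F n)"
        by blast
      then obtain r where "r > 0" "ball z r \<subseteq> euclidean interior_of (F n)"
        using openE open_openin openin_interior_of by metis
      then have "r > 0" "ball z r \<subseteq> F n"
        using interior_of_subset[of euclidean "F n"] by auto
      then show False
        using no_ball unfolding F_def by blast
    qed
  qed
  then have "euclidean interior_of (\<Union>(range F)) = {}"
    by (intro Baire_category_alt disjI1 completely_metrizable_space_euclidean) auto
  moreover have "\<Union>(range F) = UNIV"
  proof -
    have "\<zeta> \<in> \<Union>(range F)" for \<zeta>
    proof -
      obtain \<gamma> where "\<forall>i\<in>I. g i \<zeta> \<le> \<gamma>"
        using pointwise by blast
      moreover obtain n where "\<gamma> \<le> real n"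
        using real_arch_simple by blast
      ultimately have "\<zeta> \<in> F n"
        unfolding F_def by force
      then show ?thesis
        by blast
    qed
    then show ?thesis
      by blast
  qed
  ultimately show False
    using interior_of_topspace[of euclidean] by simp
qed

lemma complex_linear_add: "complex_linear csa csb f \<Longrightarrow> f (x + y) = f x + f y"
  unfolding complex_linear_def by blast

lemma complex_linear_cs: "complex_linear csa csb f \<Longrightarrow> f (csa c x) = csb c (f x)"
  unfolding complex_linear_def by blast


section \<open>Complex Hilbert spaces\<close>

locale complex_hilbert_space =
  fixes cs :: "complex \<Rightarrow> 'a::{real_normed_vector,complete_space} \<Rightarrow> 'a"
    and ip :: "'a \<Rightarrow> 'a \<Rightarrow> complex"
  assumes complex_hilbert: "complex_hilbert cs ip"
begin

lemma cs_of_real: "cs (complex_of_real r) x = r *\<^sub>R x"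
  and cs_mult: "cs (a * b) x = cs a (cs b x)"
  and cs_add: "cs a (x + y) = cs a x + cs a y"
  and ip_add_left: "ip (x + y) z = ip x z + ip y z"
  and ip_cs_left: "ip (cs c x) y = c * ip x y"
  and ip_commute: "ip x y = cnj (ip y x)"
  and ip_self: "ip x x = complex_of_real ((norm x)\<^sup>2)"
  using complex_hilbert unfolding complex_hilbert_def by blast+

lemma cs_zero: "cs 0 x = 0"
  using cs_of_real[of 0 x] by simp

lemma complex_linear_scaleR:
  "complex_linear cs (*) \<omega> \<Longrightarrow> \<omega> (r *\<^sub>R x) = complex_of_real r * \<omega> x"
  using complex_linear_cs[of cs "(*)" \<omega> "complex_of_real r" x] by (simp add: cs_of_real)

lemma complex_linear_diff:
  "complex_linear cs (*) \<omega> \<Longrightarrow> \<omega> (x - y) = \<omega> x - \<omega> y"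
  using complex_linear_add[of cs "(*)" \<omega> x "-y"] complex_linear_scaleR[of \<omega> "-1" y] by simp

lemma ip_add_right: "ip x (y + z) = ip x y + ip x z"
  by (metis complex_cnj_add ip_add_left ip_commute)

lemma ip_cs_right: "ip x (cs c y) = cnj c * ip x y"
  by (metis complex_cnj_mult ip_cs_left ip_commute)

lemma ip_scaleR_left: "ip (r *\<^sub>R x) y = complex_of_real r * ip x y"
  by (metis cs_of_real ip_cs_left)

lemma ip_scaleR_right: "ip x (r *\<^sub>R y) = complex_of_real r * ip x y"
  by (metis cs_of_real ip_cs_right complex_cnj_complex_of_real)

lemma ip_zero_right [simp]: "ip y 0 = 0"
  using ip_scaleR_right[of y 0 y] by simp

lemma ip_minus_right: "ip x (- y) = - ip x y"
  using ip_scaleR_right[of x "-1" y] by simp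

lemma ip_diff_left: "ip (x - y) z = ip x z - ip y z"
  using ip_add_left[of x "-y" z] ip_scaleR_left[of "-1" y z] by simp

lemma ip_diff_right: "ip z (x - y) = ip z x - ip z y"
  using ip_add_right[of z x "-y"] ip_minus_right[of z y] by simp

lemma ip_sum_right: "finite F \<Longrightarrow> ip x (sum f F) = (\<Sum>v\<in>F. ip x (f v))"
  by (induction F rule: finite_induct) (simp_all add: ip_add_right)

lemma ip_self_eq_0_iff: "ip x x = 0 \<longleftrightarrow> x = 0"
  by (simp add: ip_self)

lemma ip_right_injective: "(\<And>\<xi>. ip \<xi> a = ip \<xi> b) \<Longrightarrow> a = b"
  using ip_self_eq_0_iff[of "a - b"] by (simp add: ip_diff_right)

lemma Re_ip_self: "Re (ip x x) = (norm x)\<^sup>2"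
  by (simp add: ip_self)

lemma norm_add_square: "(norm (x + y))\<^sup>2 = (norm x)\<^sup>2 + (norm y)\<^sup>2 + 2 * Re (ip x y)"
proof -
  have "ip (x + y) (x + y) = ip x x + ip y y + ip x y + ip y x"
    by (simp add: ip_add_left ip_add_right)
  then have "Re (ip (x + y) (x + y)) = Re (ip x x) + Re (ip y y) + Re (ip x y) + Re (ip y x)"
    by simp
  moreover have "Re (ip y x) = Re (ip x y)"
    by (subst ip_commute) simp
  ultimately show ?thesis
    by (simp add: Re_ip_self)
qed

lemma parallelogram_law:
  fixes x y :: 'a
  shows "(norm (x - y))\<^sup>2 + (norm (x + y))\<^sup>2 = 2 * (norm x)\<^sup>2 + 2 * (norm y)\<^sup>2"
  using norm_add_square[of x "-y"] norm_add_square[of x y] by (simp add: ip_minus_right)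

lemma norm_cs_square: "(norm (cs c x))\<^sup>2 = (cmod c)\<^sup>2 * (norm x)\<^sup>2"
proof -
  have "ip (cs c x) (cs c x) = (c * cnj c) * ip x x"
    by (simp add: ip_cs_left ip_cs_right mult.assoc)
  then have "Re (ip (cs c x) (cs c x)) = (cmod c)\<^sup>2 * Re (ip x x)"
    by (simp add: complex_mult_cnj cmod_power2)
  then show ?thesis
    by (simp add: Re_ip_self)
qed

lemma norm_cs: "norm (cs c x) = cmod c * norm x"
  using norm_cs_square[of c x] by (simp add: power_mult_distrib[symmetric] power2_eq_iff_nonneg)

lemma norm_ip_le: "cmod (ip x y) \<le> norm x * norm y"
proof (cases "ip x y = 0")
  case False
  \<comment> \<open>rotate x so that the inner product becomes real and positive\<close>
  define c where "c = cnj (ip x y) / complex_of_real (cmod (ip x y))"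
  have "ip (cs c x) y = (ip x y * cnj (ip x y)) / complex_of_real (cmod (ip x y))"
    by (simp add: c_def ip_cs_left mult.commute)
  also have "ip x y * cnj (ip x y) = (complex_of_real (cmod (ip x y)))\<^sup>2"
    by (metis complex_norm_square of_real_power)
  finally have "ip (cs c x) y = complex_of_real (cmod (ip x y))"
    using False by (simp add: power2_eq_square)
  then have "cmod (ip x y) = Re (ip (cs c x) y)"
    by simp
  also have "\<dots> \<le> norm (cs c x) * norm y"
  proof -
    have "(norm (cs c x + y))\<^sup>2 \<le> (norm (cs c x) + norm y)\<^sup>2"
      by (simp add: power_mono norm_triangle_ineq)
    then show ?thesis
      using norm_add_square[of "cs c x" y] by (simp add: power2_sum)
  qed
  also have "norm (cs c x) = norm x"
    using False by (simp add: norm_cs c_def norm_divide)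
  finally show ?thesis .
qed simp

lemma bounded_linear_ip_left: "bounded_linear (\<lambda>x. ip x y)"
  by (rule bounded_linear_intro[where K = "norm y"])
     (simp_all add: ip_add_left ip_scaleR_left scaleR_conv_of_real norm_ip_le)

lemma bounded_linear_ip_right: "bounded_linear (\<lambda>y. ip x y)"
proof (rule bounded_linear_intro[where K = "norm x"])
  show "cmod (ip x y) \<le> norm y * norm x" for y
    using norm_ip_le[of x y] by (simp add: mult.commute)
qed (simp_all add: ip_add_right ip_scaleR_right scaleR_conv_of_real)

lemma bounded_linear_cs: "bounded_linear (cs c)"
  by (rule bounded_linear_intro[where K = "cmod c"])
     (simp_all add: cs_add norm_cs mult.commute flip: cs_of_real cs_mult)

lemma continuous_on_ip_left [continuous_intros]:
  "continuous_on S f \<Longrightarrow> continuous_on S (\<lambda>x. ip (f x) y)"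
  using bounded_linear.continuous_on[OF bounded_linear_ip_left] by blast

lemma continuous_on_ip_right [continuous_intros]:
  "continuous_on S f \<Longrightarrow> continuous_on S (\<lambda>x. ip y (f x))"
  using bounded_linear.continuous_on[OF bounded_linear_ip_right] by blast

lemma continuous_on_cs [continuous_intros]:
  "continuous_on S f \<Longrightarrow> continuous_on S (\<lambda>x. cs c (f x))"
  using bounded_linear.continuous_on[OF bounded_linear_cs] by blast


subsection \<open>The Riesz representation theorem\<close>

lemma Cauchy_if_minimizing_in_midpoint_convex:
  fixes a :: "nat \<Rightarrow> 'a"
  assumes midpoint: "\<And>x y. x \<in> A \<Longrightarrow> y \<in> A \<Longrightarrow> (1/2) *\<^sub>R (x + y) \<in> A"
    and lower: "\<And>x. x \<in> A \<Longrightarrow> d \<le> (norm x)\<^sup>2"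
    and a_in: "\<And>k. a k \<in> A"
    and a_min: "\<And>k. (norm (a k))\<^sup>2 < d + inverse (real (Suc k))"
  shows "Cauchy a"
proof (rule metric_CauchyI)
  have dist_square: "(norm (a j - a k))\<^sup>2 \<le> 2 * inverse (real (Suc j)) + 2 * inverse (real (Suc k))"
    for j k
  proof -
    have "d \<le> (norm ((1/2) *\<^sub>R (a j + a k)))\<^sup>2"
      by (intro lower midpoint a_in)
    then have "4 * d \<le> (norm (a j + a k))\<^sup>2"
      by (simp add: power2_eq_square)
    then show ?thesis
      using parallelogram_law[of "a j" "a k"] a_min[of j] a_min[of k] by linarith
  qed
  fix e :: real
  assume e: "e > 0"
  obtain M where M: "inverse (real (Suc M)) < e\<^sup>2 / 4"
    using e reals_Archimedean[of "e\<^sup>2 / 4"] by auto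
  have "dist (a m) (a n) < e" if "m \<ge> M" "n \<ge> M" for m n
  proof -
    have "inverse (real (Suc m)) \<le> inverse (real (Suc M))"
      "inverse (real (Suc n)) \<le> inverse (real (Suc M))"
      using that by (simp_all add: le_imp_inverse_le)
    then have "(norm (a m - a n))\<^sup>2 < e\<^sup>2"
      using dist_square[of m n] M by linarith
    then have "norm (a m - a n) < e"
      by (rule power_less_imp_less_base) (use e in auto)
    then show ?thesis
      by (simp add: dist_norm)
  qed
  then show "\<exists>M. \<forall>m\<ge>M. \<forall>n\<ge>M. dist (a m) (a n) < e"
    by blast
qed

lemma level_set_has_min_norm_element:
  assumes lin: "complex_linear cs (*) \<omega>" and cont: "continuous_on UNIV \<omega>" and x0: "\<omega> x0 \<noteq> 0"
  obtains z where "\<omega> z = 1" "\<And>x. \<omega> x = 1 \<Longrightarrow> norm z \<le> norm x"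
proof -
  define A where "A = {\<xi>. \<omega> \<xi> = 1}"
  define d where "d = Inf ((\<lambda>x. (norm x)\<^sup>2) ` A)"
  have "cs (1 / \<omega> x0) x0 \<in> A"
    using x0 lin by (simp add: A_def complex_linear_cs)
  then have A_nonempty: "(\<lambda>x. (norm x)\<^sup>2) ` A \<noteq> {}"
    by blast
  have bdd: "bdd_below ((\<lambda>x. (norm x)\<^sup>2) ` A)"
    by (rule bdd_belowI[of _ 0]) auto
  have lower: "d \<le> (norm x)\<^sup>2" if "x \<in> A" for x
    unfolding d_def by (rule cInf_lower) (use that bdd in auto)
  have "\<exists>a\<in>A. (norm a)\<^sup>2 < d + inverse (real (Suc k))" for k
    using cInf_lessD[OF A_nonempty, of "d + inverse (real (Suc k))"] by (auto simp: d_def)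
  then obtain a where a_in: "\<And>k. a k \<in> A" and a_min: "\<And>k. (norm (a k))\<^sup>2 < d + inverse (real (Suc k))"
    by metis
  have "(1/2) *\<^sub>R (x + y) \<in> A" if "x \<in> A" "y \<in> A" for x y
    using that by (simp add: A_def complex_linear_add[OF lin] complex_linear_scaleR[OF lin])
  then have "Cauchy a"
    using lower a_in a_min by (rule Cauchy_if_minimizing_in_midpoint_convex)
  then obtain z where lim: "a \<longlonglongrightarrow> z"
    using Cauchy_convergent_iff convergent_def by blast
  have "(\<lambda>k. \<omega> (a k)) \<longlonglongrightarrow> \<omega> z"
    using cont lim continuous_on_tendsto_compose[of UNIV \<omega> a z] by auto
  moreover have "(\<lambda>k. \<omega> (a k)) = (\<lambda>k. 1)"
    using a_in by (simp add: A_def)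
  ultimately have "\<omega> z = 1"
    using LIMSEQ_unique tendsto_const by metis
  moreover have z_le_d: "(norm z)\<^sup>2 \<le> d"
  proof (rule LIMSEQ_le)
    show "(\<lambda>k. (norm (a k))\<^sup>2) \<longlonglongrightarrow> (norm z)\<^sup>2"
      by (intro tendsto_intros lim)
    show "(\<lambda>k. d + inverse (real (Suc k))) \<longlonglongrightarrow> d"
      using tendsto_add[OF tendsto_const LIMSEQ_inverse_real_of_nat, of d] by simp
    show "\<exists>N. \<forall>k\<ge>N. (norm (a k))\<^sup>2 \<le> d + inverse (real (Suc k))"
      using a_min less_imp_le by blast
  qed
  moreover have "norm z \<le> norm x" if "\<omega> x = 1" for x
  proof -
    have "x \<in> A"
      using that by (simp add: A_def)
    then show ?thesis
      using power2_le_imp_le[OF order_trans[OF z_le_d lower]] by simp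
  qed
  ultimately show thesis
    using that by blast
qed

lemma min_norm_element_orthogonal_to_kernel:
  assumes lin: "complex_linear cs (*) \<omega>"
    and z: "\<omega> z = 1" and z_min: "\<And>x. \<omega> x = 1 \<Longrightarrow> norm z \<le> norm x"
    and n: "\<omega> n = 0"
  shows "ip z n = 0"
proof (rule ccontr)
  assume nz: "ip z n \<noteq> 0"
  define \<beta> where "\<beta> = (cmod (ip z n))\<^sup>2"
  define s where "s = 1 / ((norm n)\<^sup>2 + 1)"
  have n_pos: "(norm n)\<^sup>2 + 1 > 0"
    by (simp add: add_nonneg_pos)
  have \<beta>_pos: "\<beta> > 0" and s_pos: "s > 0"
    using nz n_pos by (simp_all add: \<beta>_def s_def)
  \<comment> \<open>moving z a little along n stays in the level set, but decreases the norm\<close>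
  define t where "t = - (complex_of_real s * ip z n)"
  have "norm z \<le> norm (z + cs t n)"
    using lin z n by (intro z_min) (simp add: complex_linear_add complex_linear_cs)
  then have "(norm z)\<^sup>2 \<le> (norm (z + cs t n))\<^sup>2"
    by (simp add: power_mono)
  also have "\<dots> = (norm z)\<^sup>2 - 2 * s * \<beta> + s\<^sup>2 * \<beta> * (norm n)\<^sup>2"
  proof -
    have "cnj t * ip z n = - (complex_of_real s * (cnj (ip z n) * ip z n))"
      by (simp add: t_def mult.assoc)
    also have "cnj (ip z n) * ip z n = complex_of_real \<beta>"
      unfolding \<beta>_def by (metis complex_norm_square mult.commute)
    finally have "cnj t * ip z n = - complex_of_real (s * \<beta>)"
      by simp
    moreover have "(cmod t)\<^sup>2 = s\<^sup>2 * \<beta>"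
      using s_pos by (simp add: t_def \<beta>_def norm_mult power_mult_distrib)
    ultimately show ?thesis
      using norm_add_square[of z "cs t n"] norm_cs_square[of t n] by (simp add: ip_cs_right)
  qed
  finally have "2 \<le> s * (norm n)\<^sup>2"
    using s_pos \<beta>_pos by (simp add: power2_eq_square)
  moreover have "s * (norm n)\<^sup>2 < 1"
    using n_pos by (simp add: s_def)
  ultimately show False
    by simp
qed

theorem riesz_representation:
  assumes lin: "complex_linear cs (*) \<omega>" and cont: "continuous_on UNIV \<omega>"
  obtains \<eta> where "\<And>\<xi>. \<omega> \<xi> = ip \<xi> \<eta>"
proof (cases "\<forall>\<xi>. \<omega> \<xi> = 0")
  case True
  then show thesis
    using that[of 0] by simp
next
  case False
  then obtain z where z: "\<omega> z = 1" and z_min: "\<And>x. \<omega> x = 1 \<Longrightarrow> norm z \<le> norm x"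
    using level_set_has_min_norm_element[OF lin cont] by metis
  have "z \<noteq> 0"
    using z complex_linear_cs[OF lin, of 0 0] by (auto simp: cs_zero)
  have "\<omega> \<xi> = ip \<xi> ((1 / (norm z)\<^sup>2) *\<^sub>R z)" for \<xi>
  proof -
    have "\<omega> (\<xi> - cs (\<omega> \<xi>) z) = 0"
      using z by (simp add: complex_linear_diff[OF lin] complex_linear_cs[OF lin])
    then have "ip z (\<xi> - cs (\<omega> \<xi>) z) = 0"
      using min_norm_element_orthogonal_to_kernel[OF lin z z_min] by blast
    then have "ip \<xi> z = \<omega> \<xi> * complex_of_real ((norm z)\<^sup>2)"
      by (subst ip_commute) (simp add: ip_diff_right ip_cs_right ip_self)
    then show ?thesis
      using \<open>z \<noteq> 0\<close> by (simp add: ip_scaleR_right)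
  qed
  then show thesis
    by (rule that)
qed

text \<open>A variant of the uniform boundedness principle, with the same Baire category proof.\<close>

lemma bounded_norm_if_weakly_sqrt_bounded:
  assumes weak: "\<And>\<zeta>. \<exists>\<gamma>. \<forall>i\<in>I. cmod (ip \<zeta> (w i)) \<le> \<gamma> * sqrt (norm (w i))"
  obtains M where "\<And>i. i \<in> I \<Longrightarrow> norm (w i) \<le> M"
proof -
  define g where "g i \<zeta> = cmod (ip \<zeta> (w i)) / sqrt (norm (w i))" for i \<zeta>
  have g_le_iff: "g i \<zeta> \<le> \<gamma> \<longleftrightarrow> cmod (ip \<zeta> (w i)) \<le> \<gamma> * sqrt (norm (w i))"
    if "w i \<noteq> 0" for i \<zeta> \<gamma>
    using that by (simp add: g_def pos_divide_le_eq)
  have "continuous_on UNIV (g i)" for i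
    unfolding g_def divide_inverse by (intro continuous_on_mult_right continuous_intros)
  moreover have "\<exists>\<gamma>. \<forall>i\<in>I. g i \<zeta> \<le> \<gamma>" for \<zeta>
  proof -
    obtain \<gamma> where \<gamma>: "\<forall>i\<in>I. cmod (ip \<zeta> (w i)) \<le> \<gamma> * sqrt (norm (w i))"
      using weak by blast
    have "g i \<zeta> \<le> max \<gamma> 0" if "i \<in> I" for i
    proof (cases "w i = 0")
      case False
      have "\<gamma> * sqrt (norm (w i)) \<le> max \<gamma> 0 * sqrt (norm (w i))"
        by (intro mult_right_mono) auto
      with \<gamma> that have "cmod (ip \<zeta> (w i)) \<le> max \<gamma> 0 * sqrt (norm (w i))"
        by (meson order_trans)
      then show ?thesis
        using False by (simp add: g_le_iff)
    qed (simp add: g_def)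
    then show ?thesis
      by blast
  qed
  ultimately obtain z r \<gamma> where r: "r > 0" and ball: "\<And>\<zeta> i. \<zeta> \<in> ball z r \<Longrightarrow> i \<in> I \<Longrightarrow> g i \<zeta> \<le> \<gamma>"
    using Baire_uniform_bound_on_ball[of I g] by blast
  have "norm (w i) \<le> (4 * \<gamma> / r)\<^sup>2" if i: "i \<in> I" for i
  proof (cases "w i = 0")
    case False
    define q where "q = sqrt (norm (w i))"
    have q_pos: "q > 0" and nw: "norm (w i) = q * q"
      using False by (simp_all add: q_def)
    have bound: "cmod (ip \<zeta> (w i)) \<le> \<gamma> * q" if "\<zeta> \<in> ball z r" for \<zeta>
      using ball[OF that i] g_le_iff[OF False] by (simp add: q_def)
    \<comment> \<open>test the bound at the centre and at a point in direction w i\<close>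
    define v where "v = (r / (2 * norm (w i))) *\<^sub>R w i"
    have "norm v = r / 2"
      using r False by (simp add: v_def)
    then have "z + v \<in> ball z r"
      using r by (simp add: dist_norm)
    have diff: "ip (z + v) (w i) - ip z (w i) = complex_of_real (r / 2 * q * q)"
      using False by (simp add: v_def ip_add_left ip_scaleR_left ip_self nw power2_eq_square)
    have "r / 2 * q * q = cmod (ip (z + v) (w i) - ip z (w i))"
      unfolding diff norm_of_real using r q_pos by simp
    also have "\<dots> \<le> cmod (ip (z + v) (w i)) + cmod (ip z (w i))"
      by (rule norm_triangle_ineq4)
    also have "\<dots> \<le> 2 * \<gamma> * q"
      using bound[OF \<open>z + v \<in> ball z r\<close>] bound[of z] r by simp
    finally have "q \<le> 4 * \<gamma> / r"
      using r q_pos by (simp add: field_simps)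
    then have "q\<^sup>2 \<le> (4 * \<gamma> / r)\<^sup>2"
      by (rule power_mono) (use q_pos in auto)
    then show ?thesis
      by (simp add: nw power2_eq_square)
  qed simp
  then show thesis
    by (rule that)
qed

end


section \<open>Hilbert quasi *-algebras\<close>

locale hilbert_quasi_algebra =
  fixes cs :: "complex \<Rightarrow> 'a::{real_normed_vector,complete_space} \<Rightarrow> 'a"
    and ip :: "'a \<Rightarrow> 'a \<Rightarrow> complex" and A0 :: "'a set"
    and mul :: "'a \<Rightarrow> 'a \<Rightarrow> 'a" and star :: "'a \<Rightarrow> 'a"
  assumes hilbert_quasi_star_algebra: "hilbert_quasi_star_algebra cs ip A0 mul star"
begin

sublocale complex_hilbert_space cs ip
  using hilbert_quasi_star_algebra by unfold_locales (simp add: hilbert_quasi_star_algebra_def)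

lemma zero_in_A0: "0 \<in> A0"
  and add_in_A0: "x \<in> A0 \<Longrightarrow> y \<in> A0 \<Longrightarrow> x + y \<in> A0"
  and cs_in_A0: "x \<in> A0 \<Longrightarrow> cs c x \<in> A0"
  and closure_A0: "closure A0 = UNIV"
  and mul_in_A0: "x \<in> A0 \<Longrightarrow> y \<in> A0 \<Longrightarrow> mul x y \<in> A0"
  and A0_mul_assoc: "x \<in> A0 \<Longrightarrow> y \<in> A0 \<Longrightarrow> z \<in> A0 \<Longrightarrow> mul (mul x y) z = mul x (mul y z)"
  and star_in_A0: "x \<in> A0 \<Longrightarrow> star x \<in> A0"
  and A0_star_mul: "x \<in> A0 \<Longrightarrow> y \<in> A0 \<Longrightarrow> star (mul x y) = mul (star y) (star x)"
  and star_add: "star (\<xi> + \<zeta>) = star \<xi> + star \<zeta>"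
  and star_cs: "star (cs c \<xi>) = cs (cnj c) (star \<xi>)"
  and star_star [simp]: "star (star \<xi>) = \<xi>"
  and norm_star: "norm (star \<xi>) = norm \<xi>"
  and A0_mul_continuous_left: "x \<in> A0 \<Longrightarrow> continuous_on UNIV (\<lambda>\<xi>. mul \<xi> x)"
  and A0_mul_distrib_left: "x \<in> A0 \<Longrightarrow> mul x (\<xi> + \<zeta>) = mul x \<xi> + mul x \<zeta>"
  and A0_mul_cs_right: "x \<in> A0 \<Longrightarrow> mul x (cs c \<xi>) = cs c (mul x \<xi>)"
  and A0_mul_continuous_right: "x \<in> A0 \<Longrightarrow> continuous_on UNIV (\<lambda>\<xi>. mul x \<xi>)"
  and A0_ip_mul_left: "x \<in> A0 \<Longrightarrow> y \<in> A0 \<Longrightarrow> z \<in> A0 \<Longrightarrow> ip (mul x y) z = ip y (mul (star x) z)"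
  and A0_ip_star: "x \<in> A0 \<Longrightarrow> y \<in> A0 \<Longrightarrow> ip x y = ip (star y) (star x)"
  and A0_subset_closure_span_products: "A0 \<subseteq> closure (cspan cs {mul x y | x y. x \<in> A0 \<and> y \<in> A0})"
  by (insert hilbert_quasi_star_algebra[unfolded hilbert_quasi_star_algebra_def
        complex_subspace_def complex_antilinear_def complex_linear_def]; meson)+

lemma scaleR_in_A0: "x \<in> A0 \<Longrightarrow> r *\<^sub>R x \<in> A0"
  using cs_in_A0[of x "complex_of_real r"] by (simp add: cs_of_real)

lemma bounded_linear_star: "bounded_linear star"
  by (rule bounded_linear_intro[where K = 1])
     (simp_all add: star_add norm_star star_cs flip: cs_of_real)

lemma continuous_on_star [continuous_intros]:
  "continuous_on S f \<Longrightarrow> continuous_on S (\<lambda>x. star (f x))"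
  using bounded_linear.continuous_on[OF bounded_linear_star] by blast

lemma continuous_on_mul_A0_left [continuous_intros]:
  "c \<in> A0 \<Longrightarrow> continuous_on UNIV f \<Longrightarrow> continuous_on UNIV (\<lambda>x. mul (f x) c)"
  using continuous_on_compose[of UNIV f "\<lambda>\<xi>. mul \<xi> c"] A0_mul_continuous_left[of c]
  by (auto simp: o_def intro: continuous_on_subset)

lemma continuous_on_mul_A0_right [continuous_intros]:
  "c \<in> A0 \<Longrightarrow> continuous_on UNIV f \<Longrightarrow> continuous_on UNIV (\<lambda>x. mul c (f x))"
  using continuous_on_compose[of UNIV f "\<lambda>\<xi>. mul c \<xi>"] A0_mul_continuous_right[of c]
  by (auto simp: o_def intro: continuous_on_subset)

lemma eq_by_density:
  fixes f g :: "'a \<Rightarrow> 'b::t2_space"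
  assumes "continuous_on UNIV f" "continuous_on UNIV g" "\<And>x. x \<in> A0 \<Longrightarrow> f x = g x"
  shows "f \<xi> = g \<xi>"
proof -
  have "closure A0 \<subseteq> {x. f x = g x}"
    using assms by (intro closure_minimal closed_Collect_eq) auto
  then show ?thesis
    using closure_A0 by auto
qed

lemma le_by_density:
  fixes f g :: "'a \<Rightarrow> real"
  assumes "continuous_on UNIV f" "continuous_on UNIV g" "\<And>x. x \<in> A0 \<Longrightarrow> f x \<le> g x"
  shows "f \<xi> \<le> g \<xi>"
proof -
  have "closure A0 \<subseteq> {x. f x \<le> g x}"
    using assms by (intro closure_minimal closed_Collect_le) auto
  then show ?thesis
    using closure_A0 by auto
qed


subsection \<open>Extension of the Hilbert algebra identities to H\<close>

lemma A0_ip_mul_right: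
  assumes a: "a \<in> A0" and b: "b \<in> A0" and c: "c \<in> A0"
  shows "ip (mul a (star c)) b = ip a (mul b c)"
proof -
  have "ip (mul a (star c)) b = ip (star b) (star (mul a (star c)))"
    using a b c by (intro A0_ip_star mul_in_A0 star_in_A0)
  also have "star (mul a (star c)) = mul c (star a)"
    using a c by (simp add: A0_star_mul star_in_A0)
  also have "ip (star b) (mul c (star a)) = ip (mul (star c) (star b)) (star a)"
    using a b c A0_ip_mul_left[of "star c" "star b" "star a"] by (simp add: star_in_A0)
  also have "mul (star c) (star b) = star (mul b c)"
    using b c by (simp add: A0_star_mul)
  also have "ip (star (mul b c)) (star a) = ip a (mul b c)"
    using A0_ip_star[OF a mul_in_A0[OF b c]] by simp
  finally show ?thesis .
qed

lemma ip_mul_right_adjoint: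
  assumes c: "c \<in> A0"
  shows "ip (mul \<xi> c) \<zeta> = ip \<xi> (mul \<zeta> (star c))"
proof -
  have A0_case: "ip (mul \<xi> c) b = ip \<xi> (mul b (star c))" if b: "b \<in> A0" for b \<xi>
    by (rule eq_by_density[of "\<lambda>\<xi>. ip (mul \<xi> c) b" "\<lambda>\<xi>. ip \<xi> (mul b (star c))"])
       (intro continuous_intros c, intro continuous_intros,
        use A0_ip_mul_right[of _ b "star c"] b c star_in_A0 in simp)
  show ?thesis
    by (rule eq_by_density[of "\<lambda>\<zeta>. ip (mul \<xi> c) \<zeta>" "\<lambda>\<zeta>. ip \<xi> (mul \<zeta> (star c))"])
       (intro continuous_intros, intro continuous_intros c star_in_A0, use A0_case in simp)
qed

lemma ip_mul_left_adjoint: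
  assumes a: "a \<in> A0"
  shows "ip (mul a \<xi>) \<zeta> = ip \<xi> (mul (star a) \<zeta>)"
proof -
  have A0_case: "ip (mul a b) \<zeta> = ip b (mul (star a) \<zeta>)" if b: "b \<in> A0" for b
    by (rule eq_by_density[of "\<lambda>\<zeta>. ip (mul a b) \<zeta>" "\<lambda>\<zeta>. ip b (mul (star a) \<zeta>)"])
       (intro continuous_intros, intro continuous_intros a star_in_A0,
        use A0_ip_mul_left a b in simp)
  show ?thesis
    by (rule eq_by_density[of "\<lambda>\<xi>. ip (mul a \<xi>) \<zeta>" "\<lambda>\<xi>. ip \<xi> (mul (star a) \<zeta>)"])
       (intro continuous_intros a, intro continuous_intros, use A0_case in simp)
qed

lemma ip_star: "ip \<xi> \<zeta> = ip (star \<zeta>) (star \<xi>)"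
proof -
  have A0_case: "ip \<xi> b = ip (star b) (star \<xi>)" if b: "b \<in> A0" for b \<xi>
    by (rule eq_by_density[of "\<lambda>\<xi>. ip \<xi> b" "\<lambda>\<xi>. ip (star b) (star \<xi>)"])
       (intro continuous_intros, intro continuous_intros, use A0_ip_star[OF _ b] in simp)
  show ?thesis
    by (rule eq_by_density[of "\<lambda>\<zeta>. ip \<xi> \<zeta>" "\<lambda>\<zeta>. ip (star \<zeta>) (star \<xi>)"])
       (intro continuous_intros, intro continuous_intros, erule A0_case)
qed

lemma star_mul_A0_left:
  assumes a: "a \<in> A0"
  shows "star (mul a \<xi>) = mul (star \<xi>) (star a)"
  by (rule eq_by_density[of "\<lambda>\<xi>. star (mul a \<xi>)" "\<lambda>\<xi>. mul (star \<xi>) (star a)"])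
     (intro continuous_intros a, intro continuous_intros a star_in_A0, use A0_star_mul a in simp)

lemma star_mul_A0_right:
  assumes a: "a \<in> A0"
  shows "star (mul \<xi> a) = mul (star a) (star \<xi>)"
  by (rule eq_by_density[of "\<lambda>\<xi>. star (mul \<xi> a)" "\<lambda>\<xi>. mul (star a) (star \<xi>)"])
     (intro continuous_intros a, intro continuous_intros a star_in_A0, use A0_star_mul a in simp)

lemma mul_assoc_A0_A0:
  assumes a: "a \<in> A0" and b: "b \<in> A0"
  shows "mul (mul a \<xi>) b = mul a (mul \<xi> b)"
  by (rule eq_by_density[of "\<lambda>\<xi>. mul (mul a \<xi>) b" "\<lambda>\<xi>. mul a (mul \<xi> b)"])
     (intro continuous_intros a b, intro continuous_intros a b, use A0_mul_assoc a b in simp)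

lemma mul_distrib_left:
  assumes u: "u \<in> A0" and v: "v \<in> A0"
  shows "mul \<xi> (u + v) = mul \<xi> u + mul \<xi> v"
  by (rule eq_by_density[of "\<lambda>\<xi>. mul \<xi> (u + v)" "\<lambda>\<xi>. mul \<xi> u + mul \<xi> v"])
     (intro continuous_intros add_in_A0 u v, intro continuous_intros u v,
      use A0_mul_distrib_left in simp)

lemma mul_cs_right:
  assumes u: "u \<in> A0"
  shows "mul \<xi> (cs c u) = cs c (mul \<xi> u)"
  by (rule eq_by_density[of "\<lambda>\<xi>. mul \<xi> (cs c u)" "\<lambda>\<xi>. cs c (mul \<xi> u)"])
     (intro continuous_intros cs_in_A0 u, intro continuous_intros u, use A0_mul_cs_right in simp)

lemma mul_scaleR_right: "u \<in> A0 \<Longrightarrow> mul \<xi> (r *\<^sub>R u) = r *\<^sub>R mul \<xi> u"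
  using mul_cs_right[of u \<xi> "complex_of_real r"] by (simp add: cs_of_real)

lemma ip_mul_star_self:
  assumes "x \<in> A0"
  shows "ip (mul (star x) x) \<eta> = cnj (ip (mul \<eta> (star x)) (star x))"
  using ip_mul_right_adjoint[OF assms, of "star x" \<eta>] by (simp add: ip_commute[of "star x"])

lemma eq_0_if_orthogonal_to_products:
  assumes orth: "\<And>v w. v \<in> A0 \<Longrightarrow> w \<in> A0 \<Longrightarrow> ip d (mul v w) = 0"
  shows "d = 0"
proof -
  define P where "P = {mul x y | x y. x \<in> A0 \<and> y \<in> A0}"
  have "cspan cs P \<subseteq> {p. ip d p = 0}"
  proof
    fix p
    assume "p \<in> cspan cs P"
    then obtain F c where F: "finite F" "F \<subseteq> P" and p: "p = (\<Sum>v\<in>F. cs (c v) v)"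
      unfolding cspan_def by blast
    have "ip d p = (\<Sum>v\<in>F. cnj (c v) * ip d v)"
      unfolding p by (simp add: ip_sum_right[OF F(1)] ip_cs_right)
    also have "\<dots> = 0"
      using F(2) orth by (intro sum.neutral) (auto simp: P_def)
    finally show "p \<in> {p. ip d p = 0}"
      by simp
  qed
  then have "closure (cspan cs P) \<subseteq> {p. ip d p = 0}"
    by (intro closure_minimal closed_Collect_eq continuous_intros) auto
  then have orth_A0: "ip d x = 0" if "x \<in> A0" for x
    using that A0_subset_closure_span_products by (auto simp: P_def)
  have "ip d d = 0"
    by (rule eq_by_density[of "\<lambda>p. ip d p" "\<lambda>_. 0"])
       (use orth_A0 in \<open>auto intro!: continuous_intros\<close>)
  then show ?thesis
    by (simp add: ip_self_eq_0_iff)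
qed


subsection \<open>W-positive elements\<close>

lemma w_positive_Im:
  "w_positive ip A0 mul \<eta> \<Longrightarrow> u \<in> A0 \<Longrightarrow> Im (ip (mul \<eta> u) u) = 0"
  unfolding w_positive_def less_eq_complex_def by simp

lemma w_positive_Re:
  "w_positive ip A0 mul \<eta> \<Longrightarrow> u \<in> A0 \<Longrightarrow> 0 \<le> Re (ip (mul \<eta> u) u)"
  unfolding w_positive_def less_eq_complex_def by simp

lemma quadratic_form_add_cs:
  assumes "u \<in> A0" "v \<in> A0"
  shows "ip (mul \<eta> (u + cs l v)) (u + cs l v) =
    ip (mul \<eta> u) u + cnj l * ip (mul \<eta> u) v + l * ip (mul \<eta> v) u + l * cnj l * ip (mul \<eta> v) v"
  using assms
  by (simp add: mul_distrib_left mul_cs_right cs_in_A0 ip_add_left ip_add_right ip_cs_left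
      ip_cs_right algebra_simps)

lemma w_positive_hermitian:
  assumes wp: "w_positive ip A0 mul \<eta>" and u: "u \<in> A0" and v: "v \<in> A0"
  shows "ip (mul \<eta> u) v = cnj (ip (mul \<eta> v) u)"
proof -
  have "Im (ip (mul \<eta> (u + cs l v)) (u + cs l v)) = 0" for l
    using u v by (intro w_positive_Im[OF wp] add_in_A0 cs_in_A0)
  from this[of 1] this[of \<i>] show ?thesis
    using w_positive_Im[OF wp u] w_positive_Im[OF wp v]
    by (simp add: quadratic_form_add_cs[OF u v] complex_eq_iff)
qed

lemma w_positive_star_eq:
  assumes wp: "w_positive ip A0 mul \<eta>"
  shows "star \<eta> = \<eta>"
proof -
  have "ip (\<eta> - star \<eta>) (mul v w) = 0" if v: "v \<in> A0" and w: "w \<in> A0" for v w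
  proof -
    have sw: "star w \<in> A0"
      using w by (rule star_in_A0)
    have "ip \<eta> (mul v w) = ip (mul \<eta> (star w)) v"
      using ip_mul_right_adjoint[OF sw, of \<eta> v] by simp
    also have "\<dots> = ip (star w) (mul \<eta> v)"
      by (simp add: w_positive_hermitian[OF wp sw v] ip_commute[of "star w"])
    also have "\<dots> = ip (mul (star v) (star \<eta>)) w"
      by (simp add: ip_star[of "star w"] star_mul_A0_right[OF v])
    also have "\<dots> = ip (star \<eta>) (mul v w)"
      using ip_mul_left_adjoint[OF star_in_A0[OF v]] by simp
    finally show ?thesis
      by (simp add: ip_diff_left)
  qed
  then show ?thesis
    using eq_0_if_orthogonal_to_products[of "\<eta> - star \<eta>"] by simp
qed

lemma w_positive_cauchy_schwarz:
  assumes wp: "w_positive ip A0 mul \<eta>" and u: "u \<in> A0" and v: "v \<in> A0"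
  shows "(cmod (ip (mul \<eta> u) v))\<^sup>2 \<le> Re (ip (mul \<eta> u) u) * Re (ip (mul \<eta> v) v)"
proof -
  define b where "b = ip (mul \<eta> u) v"
  define P where "P = Re (ip (mul \<eta> u) u)"
  define Q where "Q = Re (ip (mul \<eta> v) v)"
  define \<beta> where "\<beta> = (cmod b)\<^sup>2"
  have "P \<ge> 0" "Q \<ge> 0"
    unfolding P_def Q_def using w_positive_Re[OF wp] u v by auto
  have quadratic: "0 \<le> P - 2 * t * \<beta> + t\<^sup>2 * \<beta> * Q" for t
  proof -
    define l where "l = - (complex_of_real t * b)"
    have P: "ip (mul \<eta> u) u = complex_of_real P" and Q: "ip (mul \<eta> v) v = complex_of_real Q"
      using w_positive_Im[OF wp] u v by (simp_all add: P_def Q_def complex_eq_iff)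
    have b': "ip (mul \<eta> v) u = cnj b"
      using w_positive_hermitian[OF wp v u] by (simp add: b_def)
    have b_cnj_b: "b * cnj b = complex_of_real \<beta>"
      by (simp add: \<beta>_def complex_mult_cnj cmod_power2)
    have "cnj l * b = - complex_of_real (t * \<beta>)" "l * cnj b = - complex_of_real (t * \<beta>)"
      using b_cnj_b by (simp_all add: l_def mult.assoc mult.commute[of "cnj b"])
    moreover have "l * cnj l = complex_of_real (t\<^sup>2 * \<beta>)"
      using b_cnj_b by (simp add: l_def mult_ac power2_eq_square)
    ultimately have "ip (mul \<eta> (u + cs l v)) (u + cs l v) =
        complex_of_real (P - 2 * t * \<beta> + t\<^sup>2 * \<beta> * Q)"
      unfolding quadratic_form_add_cs[OF u v] b_def[symmetric] P Q b' by simp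
    moreover have "0 \<le> Re (ip (mul \<eta> (u + cs l v)) (u + cs l v))"
      using u v by (intro w_positive_Re[OF wp] add_in_A0 cs_in_A0)
    ultimately show ?thesis
      by simp
  qed
  have "\<beta> \<le> P * Q"
  proof (cases "Q > 0")
    case True
    then show ?thesis
      using quadratic[of "1 / Q"] by (simp add: power2_eq_square field_simps)
  next
    case False
    with \<open>Q \<ge> 0\<close> have "Q = 0"
      by simp
    \<comment> \<open>the quadratic degenerates to a linear function of t, which must then be constant\<close>
    show ?thesis
    proof (rule ccontr)
      assume "\<not> \<beta> \<le> P * Q"
      then have "\<beta> > 0"
        using \<open>Q = 0\<close> by simp
      then show False
        using quadratic[of "(P + 1) / (2 * \<beta>)"] \<open>Q = 0\<close> by (simp add: field_simps)
    qed
  qed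
  then show ?thesis
    by (simp add: \<beta>_def P_def Q_def b_def)
qed

lemma norm_mul_square_le_quadratic_form:
  assumes wp: "w_positive ip A0 mul \<eta>"
    and C: "\<And>x. x \<in> A0 \<Longrightarrow> norm (mul \<eta> x) \<le> C * norm x"
    and u: "u \<in> A0"
  shows "(norm (mul \<eta> u))\<^sup>2 \<le> \<bar>C\<bar> * Re (ip (mul \<eta> u) u)"
proof -
  define w where "w = mul \<eta> u"
  define K where "K = \<bar>C\<bar> * Re (ip (mul \<eta> u) u)"
  have "K \<ge> 0"
    unfolding K_def using w_positive_Re[OF wp u] by simp
  have "(cmod (ip w v))\<^sup>2 \<le> K * (norm v)\<^sup>2" for v
  proof (rule le_by_density[of "\<lambda>v. (cmod (ip w v))\<^sup>2" "\<lambda>v. K * (norm v)\<^sup>2"])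
    fix x
    assume x: "x \<in> A0"
    have "Re (ip (mul \<eta> x) x) \<le> norm (mul \<eta> x) * norm x"
      using complex_Re_le_cmod order_trans norm_ip_le by blast
    also have "\<dots> \<le> (C * norm x) * norm x"
      using C[OF x] by (rule mult_right_mono) simp
    also have "\<dots> \<le> \<bar>C\<bar> * (norm x)\<^sup>2"
      by (simp add: power2_eq_square mult_right_mono mult.assoc)
    finally have "Re (ip (mul \<eta> u) u) * Re (ip (mul \<eta> x) x) \<le> Re (ip (mul \<eta> u) u) * (\<bar>C\<bar> * (norm x)\<^sup>2)"
      using w_positive_Re[OF wp u] by (rule mult_left_mono)
    then show "(cmod (ip w x))\<^sup>2 \<le> K * (norm x)\<^sup>2"
      using w_positive_cauchy_schwarz[OF wp u x] by (simp add: w_def K_def mult_ac)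
  qed (intro continuous_intros)+
  from this[of w] have "((norm w)\<^sup>2)\<^sup>2 \<le> K * (norm w)\<^sup>2"
    by (simp add: ip_self norm_power)
  then have "(norm w)\<^sup>2 \<le> K"
    using \<open>K \<ge> 0\<close> by (cases "norm w = 0") (auto simp: power2_eq_square)
  then show ?thesis
    by (simp add: w_def K_def)
qed


lemma ip_mul_mul_cnj_if_star_eq:
  assumes sa: "star \<eta> = \<eta>" and x: "x \<in> A0" and y: "y \<in> A0"
  shows "ip (mul (mul (star y) (star \<xi>)) x) \<eta> = cnj (ip (mul (mul (star x) \<xi>) y) \<eta>)"
proof -
  have sx: "star x \<in> A0" and sy: "star y \<in> A0"
    using x y by (simp_all add: star_in_A0)
  have "cnj (ip (mul (mul (star x) \<xi>) y) \<eta>) = ip \<eta> (mul (mul (star x) \<xi>) y)"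
    by (simp add: ip_commute[of \<eta>])
  also have "\<dots> = ip (star (mul (mul (star x) \<xi>) y)) (star \<eta>)"
    by (rule ip_star)
  also have "\<dots> = ip (mul (star y) (mul (star \<xi>) x)) \<eta>"
    by (simp add: sa star_mul_A0_right[OF y] star_mul_A0_left[OF sx])
  also have "\<dots> = ip (star \<xi>) (mul y (mul \<eta> (star x)))"
    by (simp add: ip_mul_left_adjoint[OF sy] ip_mul_right_adjoint[OF x] mul_assoc_A0_A0[OF y sx])
  also have "\<dots> = ip (mul (mul (star y) (star \<xi>)) x) \<eta>"
    by (simp add: ip_mul_left_adjoint[OF sy] ip_mul_right_adjoint[OF x])
  finally show ?thesis ..
qed

lemma Rc_if_w_positive_bounded:
  assumes wp: "w_positive ip A0 mul \<eta>" and bd: "bounded_elem A0 mul \<eta>"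
    and lin: "complex_linear cs (*) \<omega>" and rep: "\<And>\<xi>. \<omega> \<xi> = ip \<xi> \<eta>"
  shows "\<omega> \<in> Rc cs A0 mul star"
proof -
  obtain C where C: "\<And>x. x \<in> A0 \<Longrightarrow> norm (mul \<eta> x) \<le> C * norm x"
    using bd unfolding bounded_elem_def by blast
  have "continuous_on UNIV (\<lambda>\<xi>. ip \<xi> \<eta>)"
    by (intro continuous_intros)
  then have cont: "continuous_on UNIV \<omega>"
    using rep by presburger
  have quadratic: "\<omega> (mul (star x) x) = cnj (ip (mul \<eta> (star x)) (star x))" if "x \<in> A0" for x
    using rep ip_mul_star_self[OF that] by simp
  have L1: "0 \<le> \<omega> (mul (star x) x)" if "x \<in> A0" for x
    using wp star_in_A0[OF that] by (simp add: quadratic[OF that] w_positive_def less_eq_complex_def)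
  have L3: "cmod (\<omega> (mul (star \<xi>) x)) \<le> (norm \<xi> * sqrt \<bar>C\<bar>) * sqrt (Re (\<omega> (mul (star x) x)))"
    if x: "x \<in> A0" for x \<xi>
  proof -
    have "cmod (\<omega> (mul (star \<xi>) x)) = cmod (ip (star \<xi>) (mul \<eta> (star x)))"
      using rep ip_mul_right_adjoint[OF x] by simp
    also have "\<dots> \<le> norm \<xi> * norm (mul \<eta> (star x))"
      using norm_ip_le[of "star \<xi>" "mul \<eta> (star x)"] by (simp add: norm_star)
    also have "norm (mul \<eta> (star x)) \<le> sqrt \<bar>C\<bar> * sqrt (Re (\<omega> (mul (star x) x)))"
      using real_sqrt_le_mono[OF norm_mul_square_le_quadratic_form[OF wp C star_in_A0[OF x]]]
      by (simp add: quadratic[OF x] real_sqrt_mult)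
    finally show ?thesis
      by (simp add: mult_left_mono mult.assoc)
  qed
  have "representable A0 mul star \<omega>"
    unfolding representable_def
  proof (intro conjI ballI allI L1)
    show "\<omega> (mul (mul (star y) (star \<xi>)) x) = cnj (\<omega> (mul (mul (star x) \<xi>) y))"
      if "x \<in> A0" "y \<in> A0" for x y \<xi>
      using ip_mul_mul_cnj_if_star_eq[OF w_positive_star_eq[OF wp] that] by (simp add: rep)
    show "\<exists>\<gamma>>0. \<forall>x\<in>A0. cmod (\<omega> (mul (star \<xi>) x)) \<le> \<gamma> * sqrt (Re (\<omega> (mul (star x) x)))" for \<xi>
    proof (intro exI conjI ballI)
      fix x
      assume "x \<in> A0"
      moreover have "(norm \<xi> * sqrt \<bar>C\<bar>) * sqrt (Re (\<omega> (mul (star x) x)))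
          \<le> (norm \<xi> * sqrt \<bar>C\<bar> + 1) * sqrt (Re (\<omega> (mul (star x) x)))"
        using L1[OF \<open>x \<in> A0\<close>] by (intro mult_right_mono) (auto simp: less_eq_complex_def)
      ultimately show "cmod (\<omega> (mul (star \<xi>) x)) \<le> (norm \<xi> * sqrt \<bar>C\<bar> + 1) * sqrt (Re (\<omega> (mul (star x) x)))"
        using L3[of x \<xi>] by linarith
    qed (simp add: add_nonneg_pos)
  qed
  then show ?thesis
    unfolding Rc_def using lin cont by blast
qed


lemma bounded_elem_if_dominated:
  assumes wp: "w_positive ip A0 mul \<eta>"
    and dominated: "\<And>\<zeta>. \<exists>\<gamma>. \<forall>u\<in>A0. cmod (ip \<zeta> (mul \<eta> u)) \<le> \<gamma> * sqrt (Re (ip (mul \<eta> u) u))"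
  shows "bounded_elem A0 mul \<eta>"
proof -
  define I where "I = {u \<in> A0. norm u \<le> 1}"
  have "\<exists>\<gamma>. \<forall>u\<in>I. cmod (ip \<zeta> (mul \<eta> u)) \<le> \<gamma> * sqrt (norm (mul \<eta> u))" for \<zeta>
  proof -
    obtain \<gamma> where \<gamma>: "\<forall>u\<in>A0. cmod (ip \<zeta> (mul \<eta> u)) \<le> \<gamma> * sqrt (Re (ip (mul \<eta> u) u))"
      using dominated by blast
    have "cmod (ip \<zeta> (mul \<eta> u)) \<le> max \<gamma> 0 * sqrt (norm (mul \<eta> u))" if "u \<in> I" for u
    proof -
      have u: "u \<in> A0" "norm u \<le> 1"
        using that by (auto simp: I_def)
      have "Re (ip (mul \<eta> u) u) \<le> norm (mul \<eta> u) * norm u"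
        using complex_Re_le_cmod order_trans norm_ip_le by blast
      also have "\<dots> \<le> norm (mul \<eta> u)"
        using u(2) by (simp add: mult_left_le)
      finally have "sqrt (Re (ip (mul \<eta> u) u)) \<le> sqrt (norm (mul \<eta> u))"
        by (rule real_sqrt_le_mono)
      then have "max \<gamma> 0 * sqrt (Re (ip (mul \<eta> u) u)) \<le> max \<gamma> 0 * sqrt (norm (mul \<eta> u))"
        by (rule mult_left_mono) simp
      moreover have "\<gamma> * sqrt (Re (ip (mul \<eta> u) u)) \<le> max \<gamma> 0 * sqrt (Re (ip (mul \<eta> u) u))"
        using w_positive_Re[OF wp u(1)] by (intro mult_right_mono) auto
      ultimately show ?thesis
        using \<gamma> u(1) by force
    qed
    then show ?thesis
      by blast
  qed
  then obtain M where M: "\<And>u. u \<in> I \<Longrightarrow> norm (mul \<eta> u) \<le> M"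
    using bounded_norm_if_weakly_sqrt_bounded[of I "mul \<eta>"] by blast
  have "norm (mul \<eta> x) \<le> M * norm x" if x: "x \<in> A0" for x
  proof (cases "x = 0")
    case False
    then have "(1 / norm x) *\<^sub>R x \<in> I"
      using x by (simp add: I_def scaleR_in_A0)
    then have "norm ((1 / norm x) *\<^sub>R mul \<eta> x) \<le> M"
      using M mul_scaleR_right[OF x] by metis
    then show ?thesis
      using False by (simp add: field_simps)
  qed (use mul_scaleR_right[OF zero_in_A0, of \<eta> 0] in simp)
  then show ?thesis
    unfolding bounded_elem_def by blast
qed

lemma w_positive_bounded_if_Rc:
  assumes "\<omega> \<in> Rc cs A0 mul star"
  obtains \<eta> where "w_positive ip A0 mul \<eta>" "bounded_elem A0 mul \<eta>" "\<And>\<xi>. \<omega> \<xi> = ip \<xi> \<eta>"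
proof -
  have lin: "complex_linear cs (*) \<omega>" and cont: "continuous_on UNIV \<omega>"
    and L1: "\<And>x. x \<in> A0 \<Longrightarrow> 0 \<le> \<omega> (mul (star x) x)"
    and L3: "\<And>\<xi>. \<exists>\<gamma>>0. \<forall>x\<in>A0. cmod (\<omega> (mul (star \<xi>) x)) \<le> \<gamma> * sqrt (Re (\<omega> (mul (star x) x)))"
    using assms unfolding Rc_def representable_def by blast+
  obtain \<eta> where rep: "\<And>\<xi>. \<omega> \<xi> = ip \<xi> \<eta>"
    using riesz_representation[OF lin cont] by blast
  have quadratic: "ip (mul \<eta> u) u = cnj (\<omega> (mul (star (star u)) (star u)))" if "u \<in> A0" for u
    using ip_mul_star_self[OF star_in_A0[OF that], of \<eta>] by (simp add: rep)
  have wp: "w_positive ip A0 mul \<eta>"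
    unfolding w_positive_def
    using L1[OF star_in_A0] by (simp add: quadratic less_eq_complex_def)
  have "bounded_elem A0 mul \<eta>"
  proof (rule bounded_elem_if_dominated[OF wp])
    fix \<zeta>
    obtain \<gamma> where \<gamma>: "\<forall>x\<in>A0. cmod (\<omega> (mul \<zeta> x)) \<le> \<gamma> * sqrt (Re (\<omega> (mul (star x) x)))"
      using L3[of "star \<zeta>"] by auto
    have "cmod (ip \<zeta> (mul \<eta> u)) \<le> \<gamma> * sqrt (Re (ip (mul \<eta> u) u))" if u: "u \<in> A0" for u
    proof -
      have "cmod (\<omega> (mul \<zeta> (star u))) \<le> \<gamma> * sqrt (Re (\<omega> (mul (star (star u)) (star u))))"
        using \<gamma> star_in_A0[OF u] by blast
      moreover have "\<omega> (mul \<zeta> (star u)) = ip \<zeta> (mul \<eta> u)"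
        using ip_mul_right_adjoint[OF star_in_A0[OF u], of \<zeta> \<eta>] by (simp add: rep)
      ultimately show ?thesis
        by (simp add: quadratic[OF u])
    qed
    then show "\<exists>\<gamma>. \<forall>u\<in>A0. cmod (ip \<zeta> (mul \<eta> u)) \<le> \<gamma> * sqrt (Re (ip (mul \<eta> u) u))"
      by blast
  qed
  with wp rep that show thesis
    by blast
qed

end


theorem mainTheorem11:
  fixes cs :: "complex \<Rightarrow> 'a::{real_normed_vector,complete_space} \<Rightarrow> 'a"
    and ip :: "'a \<Rightarrow> 'a \<Rightarrow> complex" and A0 :: "'a set"
    and mul :: "'a \<Rightarrow> 'a \<Rightarrow> 'a" and star :: "'a \<Rightarrow> 'a"
    and \<omega> :: "'a \<Rightarrow> complex"
  assumes "hilbert_quasi_star_algebra cs ip A0 mul star"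
    and "complex_linear cs (*) \<omega>"
  shows "\<omega> \<in> Rc cs A0 mul star \<longleftrightarrow>
         (\<exists>!\<eta>. w_positive ip A0 mul \<eta> \<and> bounded_elem A0 mul \<eta> \<and> (\<forall>\<xi>. \<omega> \<xi> = ip \<xi> \<eta>))"
proof -
  interpret hilbert_quasi_algebra cs ip A0 mul star
    by unfold_locales (rule assms(1))
  have unique: "\<eta> = \<eta>'" if "\<forall>\<xi>. \<omega> \<xi> = ip \<xi> \<eta>" "\<forall>\<xi>. \<omega> \<xi> = ip \<xi> \<eta>'" for \<eta> \<eta>'
    using that by (intro ip_right_injective) simp
  show ?thesis
  proof
    assume "\<omega> \<in> Rc cs A0 mul star"
    then show "\<exists>!\<eta>. w_positive ip A0 mul \<eta> \<and> bounded_elem A0 mul \<eta> \<and> (\<forall>\<xi>. \<omega> \<xi> = ip \<xi> \<eta>)"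
      by (rule w_positive_bounded_if_Rc) (use unique in blast)
  next
    assume "\<exists>!\<eta>. w_positive ip A0 mul \<eta> \<and> bounded_elem A0 mul \<eta> \<and> (\<forall>\<xi>. \<omega> \<xi> = ip \<xi> \<eta>)"
    then show "\<omega> \<in> Rc cs A0 mul star"
      using Rc_if_w_positive_bounded[OF _ _ assms(2)] by blast
  qed
qed

end
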